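(* Let $m\ge 2$, $n\ge1$ and $1\le u\le n$ be integers. Then $$\big(\dim\mathcal H_n^m\big)^{-2}\sum_{i=0}^{u-1}d_{\lambda_{n-i}}\;=\;1-\Big[\prod_{i=1}^{u}\frac{n-i+1}{n+m-i}\Big]^2 ,$$ where $d_{\lambda_k}$ is the dimension of $\lambda_k$ and $\dim\mathcal H_n^m=\binom{n+m-1}{n}$.
   Context: For $k\in\mathbb N$, $\lambda_k$ denotes the irreducible representation of $\mathrm{SU}(m)$ with Young diagram $(2k,k,\dots,k,0)$, i.e. first row of $2k$ boxes, rows $2,\dots,m-1$ of $k$ boxes each, and empty $m$-th row; $d_{\lambda_k}$ is its dimension. $\mathcal H_n^m$ is the space of $n$ bosons in $m$ modes, of dimension $\binom{n+m-1}{n}$. *)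

theory Defs
  imports Complex_Main
begin

definition young_lambda :: "nat \<Rightarrow> nat \<Rightarrow> nat \<Rightarrow> nat" where
  "young_lambda m k i = (if i = 0 then 2 * k else if i < m - 1 then k else 0)"

text \<open>Dimension of the irreducible SU(m) representation with highest weight given by
  the partition lam (rows lam 0 >= ... >= lam (m-1)), via the Weyl dimension formula.\<close>
definition weyl_dim :: "nat \<Rightarrow> (nat \<Rightarrow> nat) \<Rightarrow> real" where
  "weyl_dim m lam = (\<Prod>i<m. \<Prod>j\<in>{i<..<m}.
      (real (lam i) - real (lam j) + real j - real i) / (real j - real i))"

definition d_lambda :: "nat \<Rightarrow> nat \<Rightarrow> real" where
  "d_lambda m k = weyl_dim m (young_lambda m k)"

definition dim_bosons :: "nat \<Rightarrow> nat \<Rightarrow> nat" where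
  "dim_bosons n m = (n + m - 1) choose n"

end

(* Write D_m(k) = dim H_k^m = C(k+m-1, k). In the Weyl product for (2k,k,...,k,0) only the
   first row and the last column are nontrivial: apart from their common corner factor
   (2k+m-1)/(m-1), each contributes C(k+m-2, m-2) = D_(m-1)(k). Pascal's rule
   D_m(k) = D_m(k-1) + D_(m-1)(k) and absorption D_m(k-1) (m-1) = D_(m-1)(k) k turn
   d_(lambda_k) into D_m(k)^2 - D_m(k-1)^2, so the sum telescopes to D_m(n)^2 - D_m(n-u)^2,
   while D_m(k-1)/D_m(k) = k/(k+m-1) gives the product. *)
theory Submission
  imports Defs
begin

definition weyl_row :: "nat \<Rightarrow> (nat \<Rightarrow> nat) \<Rightarrow> nat \<Rightarrow> real" where
  "weyl_row m lam i = (\<Prod>j\<in>{i<..<m}.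
      (real (lam i) - real (lam j) + real j - real i) / (real j - real i))"

lemma weyl_dim_eq_prod_weyl_row: "weyl_dim m lam = (\<Prod>i<m. weyl_row m lam i)"
  unfolding weyl_dim_def weyl_row_def ..

lemma weyl_row_last: "weyl_row m lam (m - 1) = 1"
  unfolding weyl_row_def by (rule prod.neutral) auto

lemma binomial_eq_prod_ratio:
  "real ((k + M) choose M) = (\<Prod>j\<in>{0<..M}. real (k + j) / real j)"
proof -
  have "real ((k + M) choose M) = (\<Prod>i\<in>{0..<M}. real (k + M - i) / real (M - i))"
    by (rule binomial_altdef_of_nat) simp
  also have "\<dots> = (\<Prod>j\<in>{Suc 0..M}. real (k + M - (M - j)) / real (M - (M - j)))"
    by (subst prod.atLeastLessThan_rev_at_least_Suc_atMost) simp
  also have "\<dots> = (\<Prod>j\<in>{0<..M}. real (k + j) / real j)"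
    by (intro prod.cong) auto
  finally show ?thesis .
qed

lemma weyl_row_young_lambda_first:
  "weyl_row (M + 2) (young_lambda (M + 2) k) 0
     = real ((k + M) choose M) * (2 * real k + real M + 1) / (real M + 1)"
proof -
  have "{0<..<M + 2} = insert (M + 1) {0<..M}" by auto
  then have "weyl_row (M + 2) (young_lambda (M + 2) k) 0
      = (2 * real k + real M + 1) / (real M + 1) * (\<Prod>j\<in>{0<..M}. real (k + j) / real j)"
    unfolding weyl_row_def
    by (simp add: young_lambda_def add_ac)
  then show ?thesis by (simp add: binomial_eq_prod_ratio)
qed

lemma weyl_row_young_lambda_middle:
  assumes "0 < i" "i \<le> M"
  shows "weyl_row (M + 2) (young_lambda (M + 2) k) i = real (k + M + 1 - i) / real (M + 1 - i)"
proof -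
  have "{i<..<M + 2} = insert (M + 1) {i<..M}" using assms by auto
  moreover have "(\<Prod>j\<in>{i<..M}. (real (young_lambda (M + 2) k i) - real (young_lambda (M + 2) k j)
      + real j - real i) / (real j - real i)) = 1"
    using assms by (intro prod.neutral) (auto simp: young_lambda_def)
  ultimately show ?thesis
    using assms unfolding weyl_row_def by (simp add: young_lambda_def of_nat_diff)
qed

lemma dim_bosons_Suc_modes: "dim_bosons k (Suc M) = (k + M) choose M"
  unfolding dim_bosons_def using binomial_symmetric[of k "k + M"] by simp

lemma d_lambda_eq:
  assumes "2 \<le> m"
  shows "d_lambda m k = real (dim_bosons k (m - 1))^2 * (2 * real k + real m - 1) / (real m - 1)"
proof -
  obtain M where m: "m = M + 2" using assms le_Suc_ex by (metis add.commute)
  let ?row = "weyl_row (M + 2) (young_lambda (M + 2) k)"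
  let ?c = "real ((k + M) choose M)"
  have "(\<Prod>i<M + 2. ?row i) = ?row 0 * (\<Prod>i<M. ?row (Suc i)) * ?row (M + 1)"
    using prod.lessThan_Suc[of ?row "Suc M"] prod.lessThan_Suc_shift[of ?row M] by simp
  also have "(\<Prod>i<M. ?row (Suc i)) = (\<Prod>i\<in>{0..<M}. real (k + M - i) / real (M - i))"
  proof (rule prod.cong)
    fix i assume "i \<in> {0..<M}"
    then show "?row (Suc i) = real (k + M - i) / real (M - i)"
      using weyl_row_young_lambda_middle[of "Suc i" M k] by simp
  qed auto
  also have "\<dots> = ?c"
    by (rule binomial_altdef_of_nat [symmetric]) simp
  also have "?row (M + 1) = 1"
    using weyl_row_last[of "M + 2"] by simp
  finally have "(\<Prod>i<M + 2. ?row i) = ?c^2 * (2 * real k + real M + 1) / (real M + 1)"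
    using weyl_row_young_lambda_first[of M k] by (simp add: power2_eq_square)
  then show ?thesis
    unfolding d_lambda_def weyl_dim_eq_prod_weyl_row m
    by (simp add: dim_bosons_Suc_modes numeral_2_eq_2 add_ac)
qed

lemma dim_bosons_pos: "0 < m \<Longrightarrow> 0 < dim_bosons n m"
  unfolding dim_bosons_def by simp

lemma dim_bosons_Suc_pascal:
  "0 < m \<Longrightarrow> dim_bosons (Suc k) m = dim_bosons k m + dim_bosons (Suc k) (m - 1)"
  unfolding dim_bosons_def by (cases m) simp_all

lemma dim_bosons_absorb:
  "dim_bosons k m * (m - 1) = dim_bosons (Suc k) (m - 1) * Suc k"
proof (cases m)
  case (Suc M)
  have "Suc (k + M) * (k + M choose k) = ((k + M choose k) + (k + M choose Suc k)) * Suc k"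
    using Suc_times_binomial_eq[of "k + M" k] by simp
  then show ?thesis
    unfolding dim_bosons_def Suc by (simp add: algebra_simps)
qed (simp add: dim_bosons_def)

lemma dim_bosons_Suc_ratio:
  assumes "0 < m"
  shows "dim_bosons (Suc k) m * Suc k = dim_bosons k m * (k + m)"
proof -
  from assms obtain M where "m = Suc M" using gr0_implies_Suc by blast
  then show ?thesis
    using Suc_times_binomial_eq[of "k + M" k] unfolding dim_bosons_def
    by (simp del: binomial_Suc_Suc add: mult.commute)
qed

lemma d_lambda_Suc_eq_diff_squares:
  assumes "2 \<le> m"
  shows "d_lambda m (Suc k) = real (dim_bosons (Suc k) m)^2 - real (dim_bosons k m)^2"
proof -
  let ?c = "real (dim_bosons (Suc k) (m - 1))"
  let ?E = "real (dim_bosons k m)"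
  have pascal: "real (dim_bosons (Suc k) m) = ?E + ?c"
    using dim_bosons_Suc_pascal[of m k] assms by simp
  have absorb: "?E * (real m - 1) = ?c * (real k + 1)"
    using arg_cong[OF dim_bosons_absorb[of k m], of real] assms by (simp add: of_nat_diff algebra_simps)
  have "real m - 1 \<noteq> 0" using assms by simp
  then have "(?E + ?c)^2 - ?E^2 = ?c * (?c * (real m - 1) + 2 * (?E * (real m - 1))) / (real m - 1)"
    by (simp add: field_simps power2_eq_square)
  also have "\<dots> = ?c^2 * (2 * real (Suc k) + real m - 1) / (real m - 1)"
    unfolding absorb by (simp add: algebra_simps power2_eq_square)
  finally have "?c^2 * (2 * real (Suc k) + real m - 1) / (real m - 1) = (?E + ?c)^2 - ?E^2" ..
  then show ?thesis
    using d_lambda_eq[OF assms, of "Suc k"] pascal by simp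
qed

lemma sum_d_lambda_telescope:
  assumes "2 \<le> m" "u \<le> n"
  shows "(\<Sum>i<u. d_lambda m (n - i)) = real (dim_bosons n m)^2 - real (dim_bosons (n - u) m)^2"
  using assms(2)
proof (induction u)
  case (Suc u)
  then have "n - u = Suc (n - Suc u)" by simp
  then show ?case
    using Suc d_lambda_Suc_eq_diff_squares[OF assms(1), of "n - Suc u"] by simp
qed simp

lemma dim_bosons_diff_eq_prod:
  assumes "0 < m" "u \<le> n"
  shows "real (dim_bosons (n - u) m)
    = real (dim_bosons n m) * (\<Prod>i=1..u. real (n - i + 1) / real (n + m - i))"
  using assms(2)
proof (induction u)
  case (Suc u)
  define j where "j = n - Suc u"
  have j: "n - Suc u = j" "n - u = Suc j" "n + m - Suc u = j + m"
    using Suc.prems unfolding j_def by simp_all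
  have "real (dim_bosons j m) = real (dim_bosons (Suc j) m) * (real (Suc j) / real (j + m))"
    using arg_cong[OF dim_bosons_Suc_ratio[OF assms(1), of j], of real] assms(1)
    by (simp add: field_simps)
  also have "\<dots> = real (dim_bosons n m)
      * (\<Prod>i=1..u. real (n - i + 1) / real (n + m - i)) * (real (Suc j) / real (j + m))"
    using Suc j(2) by simp
  also have "\<dots> = real (dim_bosons n m) * (\<Prod>i=1..Suc u. real (n - i + 1) / real (n + m - i))"
    using j by (simp add: prod.nat_ivl_Suc' mult.assoc)
  finally show ?case
    unfolding j(1) .
qed simp

theorem mainTheorem3:
  fixes m n u :: nat
  assumes "m \<ge> 2" and "n \<ge> 1" and "1 \<le> u" and "u \<le> n"
  shows "(\<Sum>i<u. d_lambda m (n - i)) / (real (dim_bosons n m))^2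
         = 1 - (\<Prod>i=1..u. real (n - i + 1) / real (n + m - i))^2"
proof -
  let ?B = "real (dim_bosons n m)"
  let ?P = "\<Prod>i=1..u. real (n - i + 1) / real (n + m - i)"
  have "0 < m" using assms(1) by simp
  then have "?B \<noteq> 0" using dim_bosons_pos by simp
  have "(\<Sum>i<u. d_lambda m (n - i)) = ?B^2 - (?B * ?P)^2"
    using sum_d_lambda_telescope[OF assms(1,4)] dim_bosons_diff_eq_prod[OF \<open>0 < m\<close> assms(4)]
    by simp
  with \<open>?B \<noteq> 0\<close> show ?thesis
    by (simp add: field_simps power2_eq_square)
qed

end
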